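(* Let $H$ be a finite-dimensional Hopf algebra over $\mathbb{C}$ and $V$ a finite-dimensional left $H$-module. For $\omega\in\mathbb{C}$ with $|\omega|=1$ put $\mathrm{LKer}^{\omega}_V=\{h\in H\mid \sum h_1\otimes h_2\cdot v=\omega\, h\otimes v\ \ \forall v\in V\}$, and $\mathrm{LKer}_V=\mathrm{LKer}^1_V$. Then: (i) if $\mathrm{LKer}^{\omega}_V\neq0$, it is a left coideal of $H$ stable under the left adjoint action $h\cdot a=\sum h_1aS(h_2)$; (ii) $\mathrm{LKer}^{\omega}_V\,\mathrm{LKer}^{\omega'}_V\subset\mathrm{LKer}^{\omega\omega'}_V$; (iii) if $\omega^l=1$ then $\mathrm{LKer}^{\omega}_V\subset\mathrm{LKer}_{V^{\otimes l}}$ (with $H$ acting diagonally on $V^{\otimes l}$); (iv) $\bigoplus_{\omega}\mathrm{LKer}^{\omega}_V$ (sum over all $\omega$ with $|\omega|=1$) is a normal left coideal subalgebra of $H$.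
   Context: A left coideal subalgebra of $H$ is called normal if it is stable under the left adjoint action of $H$ on itself, $h\cdot a=\sum h_1aS(h_2)$, where $S$ is the antipode. *)

theory Defs
  imports Complex_Main
begin

text \<open>A finite-dimensional Hopf algebra over the complex numbers is given in coordinates
  with respect to a basis e_0, ..., e_(n-1), where n = hdim H.  Elements of H are coordinate
  vectors (nat => complex) vanishing at indices >= n; elements of a tensor product of two
  spaces are coordinate matrices (nat => nat => complex).
  Conventions:
    e_i e_j = sum_k hmu i j k e_k;  1 = sum_k hunit k e_k;
    Delta(e_k) = sum_{i,j} hdelta k i j (e_i tensor e_j);  eps(e_k) = heps k;
    S(e_k) = sum_i hS k i e_i.\<close>

record hopf =
  hdim   :: nat
  hmu    :: "nat \<Rightarrow> nat \<Rightarrow> nat \<Rightarrow> complex"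
  hunit  :: "nat \<Rightarrow> complex"
  hdelta :: "nat \<Rightarrow> nat \<Rightarrow> nat \<Rightarrow> complex"
  heps   :: "nat \<Rightarrow> complex"
  hS     :: "nat \<Rightarrow> nat \<Rightarrow> complex"

text \<open>A finite-dimensional left module with basis w_0, ..., w_(d-1), d = mdim V:
  e_k . w_j = sum_i mrho k i j w_i.\<close>

record hmod =
  mdim :: nat
  mrho :: "nat \<Rightarrow> nat \<Rightarrow> nat \<Rightarrow> complex"

definition vsp :: "nat \<Rightarrow> (nat \<Rightarrow> complex) set" where
  "vsp m = {x. \<forall>k\<ge>m. x k = 0}"

definition bas :: "nat \<Rightarrow> nat \<Rightarrow> complex" where
  "bas i = (\<lambda>k. if k = i then 1 else 0)"

definition mult :: "hopf \<Rightarrow> (nat \<Rightarrow> complex) \<Rightarrow> (nat \<Rightarrow> complex) \<Rightarrow> nat \<Rightarrow> complex" where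
  "mult H x y = (\<lambda>k. if k < hdim H then
      (\<Sum>i<hdim H. \<Sum>j<hdim H. x i * y j * hmu H i j k) else 0)"

definition one :: "hopf \<Rightarrow> nat \<Rightarrow> complex" where
  "one H = (\<lambda>k. if k < hdim H then hunit H k else 0)"

definition comult :: "hopf \<Rightarrow> (nat \<Rightarrow> complex) \<Rightarrow> nat \<Rightarrow> nat \<Rightarrow> complex" where
  "comult H x = (\<lambda>i j. if i < hdim H \<and> j < hdim H then
      (\<Sum>k<hdim H. x k * hdelta H k i j) else 0)"

definition counit :: "hopf \<Rightarrow> (nat \<Rightarrow> complex) \<Rightarrow> complex" where
  "counit H x = (\<Sum>k<hdim H. x k * heps H k)"

definition antipode :: "hopf \<Rightarrow> (nat \<Rightarrow> complex) \<Rightarrow> nat \<Rightarrow> complex" where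
  "antipode H x = (\<lambda>i. if i < hdim H then (\<Sum>k<hdim H. x k * hS H k i) else 0)"

definition tprod :: "(nat \<Rightarrow> complex) \<Rightarrow> (nat \<Rightarrow> complex) \<Rightarrow> nat \<Rightarrow> nat \<Rightarrow> complex" where
  "tprod x y = (\<lambda>i j. x i * y j)"

definition tmult :: "hopf \<Rightarrow> (nat \<Rightarrow> nat \<Rightarrow> complex) \<Rightarrow> (nat \<Rightarrow> nat \<Rightarrow> complex)
                     \<Rightarrow> nat \<Rightarrow> nat \<Rightarrow> complex" where
  "tmult H t u = (\<lambda>k l. if k < hdim H \<and> l < hdim H then
      (\<Sum>i<hdim H. \<Sum>i'<hdim H. \<Sum>j<hdim H. \<Sum>j'<hdim H.
          t i i' * u j j' * hmu H i j k * hmu H i' j' l) else 0)"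

definition mSid :: "hopf \<Rightarrow> (nat \<Rightarrow> nat \<Rightarrow> complex) \<Rightarrow> nat \<Rightarrow> complex" where
  "mSid H t = (\<lambda>k. \<Sum>i<hdim H. \<Sum>j<hdim H.
      t i j * mult H (antipode H (bas i)) (bas j) k)"

definition midS :: "hopf \<Rightarrow> (nat \<Rightarrow> nat \<Rightarrow> complex) \<Rightarrow> nat \<Rightarrow> complex" where
  "midS H t = (\<lambda>k. \<Sum>i<hdim H. \<Sum>j<hdim H.
      t i j * mult H (bas i) (antipode H (bas j)) k)"

definition hopf_algebra :: "hopf \<Rightarrow> bool" where
  "hopf_algebra H \<longleftrightarrow>
     (\<forall>x\<in>vsp (hdim H). \<forall>y\<in>vsp (hdim H). \<forall>z\<in>vsp (hdim H).
         mult H (mult H x y) z = mult H x (mult H y z)) \<and>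
     (\<forall>x\<in>vsp (hdim H). mult H (one H) x = x \<and> mult H x (one H) = x) \<and>
     (\<forall>k<hdim H. \<forall>i<hdim H. \<forall>j<hdim H. \<forall>l<hdim H.
         (\<Sum>m<hdim H. hdelta H k m l * hdelta H m i j)
       = (\<Sum>m<hdim H. hdelta H k i m * hdelta H m j l)) \<and>
     (\<forall>x\<in>vsp (hdim H).
         (\<lambda>i. \<Sum>j<hdim H. heps H j * comult H x j i) = x \<and>
         (\<lambda>i. \<Sum>j<hdim H. comult H x i j * heps H j) = x) \<and>
     (\<forall>x\<in>vsp (hdim H). \<forall>y\<in>vsp (hdim H).
         comult H (mult H x y) = tmult H (comult H x) (comult H y)) \<and>
     comult H (one H) = tprod (one H) (one H) \<and>
     (\<forall>x\<in>vsp (hdim H). \<forall>y\<in>vsp (hdim H).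
         counit H (mult H x y) = counit H x * counit H y) \<and>
     counit H (one H) = 1 \<and>
     (\<forall>x\<in>vsp (hdim H).
         mSid H (comult H x) = (\<lambda>k. counit H x * one H k) \<and>
         midS H (comult H x) = (\<lambda>k. counit H x * one H k))"

definition act :: "hopf \<Rightarrow> hmod \<Rightarrow> (nat \<Rightarrow> complex) \<Rightarrow> (nat \<Rightarrow> complex) \<Rightarrow> nat \<Rightarrow> complex" where
  "act H V x v = (\<lambda>i. if i < mdim V then
      (\<Sum>k<hdim H. \<Sum>j<mdim V. x k * v j * mrho V k i j) else 0)"

definition hmodule :: "hopf \<Rightarrow> hmod \<Rightarrow> bool" where
  "hmodule H V \<longleftrightarrow>
     (\<forall>x\<in>vsp (hdim H). \<forall>y\<in>vsp (hdim H). \<forall>v\<in>vsp (mdim V).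
         act H V (mult H x y) v = act H V x (act H V y v)) \<and>
     (\<forall>v\<in>vsp (mdim V). act H V (one H) v = v)"

text \<open>Tensor product of modules (diagonal action via Delta); basis v_a tensor w_b of V tensor W
  is indexed by a * mdim W + b.  The trivial module is C with action via eps.\<close>

definition tens_mod :: "hopf \<Rightarrow> hmod \<Rightarrow> hmod \<Rightarrow> hmod" where
  "tens_mod H V W = \<lparr> mdim = mdim V * mdim W,
     mrho = (\<lambda>k p q. \<Sum>i<hdim H. \<Sum>j<hdim H. hdelta H k i j
              * mrho V i (p div mdim W) (q div mdim W)
              * mrho W j (p mod mdim W) (q mod mdim W)) \<rparr>"

definition triv_mod :: "hopf \<Rightarrow> hmod" where
  "triv_mod H = \<lparr> mdim = 1, mrho = (\<lambda>k i j. heps H k) \<rparr>"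

primrec tpow :: "hopf \<Rightarrow> hmod \<Rightarrow> nat \<Rightarrow> hmod" where
  "tpow H V 0 = triv_mod H"
| "tpow H V (Suc l) = tens_mod H (tpow H V l) V"

definition coact :: "hopf \<Rightarrow> hmod \<Rightarrow> (nat \<Rightarrow> complex) \<Rightarrow> (nat \<Rightarrow> complex) \<Rightarrow> nat \<Rightarrow> nat \<Rightarrow> complex" where
  "coact H V h v = (\<lambda>i l. \<Sum>j<hdim H. comult H h i j * act H V (bas j) v l)"

definition LKer :: "hopf \<Rightarrow> hmod \<Rightarrow> complex \<Rightarrow> (nat \<Rightarrow> complex) set" where
  "LKer H V \<omega> = {h \<in> vsp (hdim H). \<forall>v\<in>vsp (mdim V).
      coact H V h v = (\<lambda>i l. \<omega> * tprod h v i l)}"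

definition lsub :: "nat \<Rightarrow> (nat \<Rightarrow> complex) set \<Rightarrow> bool" where
  "lsub m L \<longleftrightarrow> L \<subseteq> vsp m \<and> (\<lambda>_. 0) \<in> L \<and>
     (\<forall>x\<in>L. \<forall>y\<in>L. (\<lambda>k. x k + y k) \<in> L) \<and> (\<forall>c. \<forall>x\<in>L. (\<lambda>k. c * x k) \<in> L)"

text \<open>Left coideal: subspace L with Delta(L) contained in H tensor L.\<close>

definition left_coideal :: "hopf \<Rightarrow> (nat \<Rightarrow> complex) set \<Rightarrow> bool" where
  "left_coideal H L \<longleftrightarrow> lsub (hdim H) L \<and>
     (\<forall>h\<in>L. \<forall>i<hdim H. (\<lambda>j. comult H h i j) \<in> L)"

definition adj :: "hopf \<Rightarrow> (nat \<Rightarrow> complex) \<Rightarrow> (nat \<Rightarrow> complex) \<Rightarrow> nat \<Rightarrow> complex" where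
  "adj H h a = (\<lambda>k. \<Sum>i<hdim H. \<Sum>j<hdim H.
      comult H h i j * mult H (mult H (bas i) a) (antipode H (bas j)) k)"

definition ad_stable :: "hopf \<Rightarrow> (nat \<Rightarrow> complex) set \<Rightarrow> bool" where
  "ad_stable H L \<longleftrightarrow> (\<forall>h\<in>vsp (hdim H). \<forall>a\<in>L. adj H h a \<in> L)"

definition subalgebra :: "hopf \<Rightarrow> (nat \<Rightarrow> complex) set \<Rightarrow> bool" where
  "subalgebra H L \<longleftrightarrow> lsub (hdim H) L \<and> one H \<in> L \<and> (\<forall>a\<in>L. \<forall>b\<in>L. mult H a b \<in> L)"

definition normal_left_coideal_subalgebra :: "hopf \<Rightarrow> (nat \<Rightarrow> complex) set \<Rightarrow> bool" where
  "normal_left_coideal_subalgebra H L \<longleftrightarrow>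
     left_coideal H L \<and> subalgebra H L \<and> ad_stable H L"

definition LKsum :: "hopf \<Rightarrow> hmod \<Rightarrow> (nat \<Rightarrow> complex) set" where
  "LKsum H V = {x. \<exists>F a. finite F \<and> F \<subseteq> {\<omega>. cmod \<omega> = 1} \<and>
      (\<forall>\<omega>\<in>F. a \<omega> \<in> LKer H V \<omega>) \<and> x = (\<lambda>k. \<Sum>\<omega>\<in>F. a \<omega> k)}"

end

theory Submission
  imports Defs
begin

text \<open>Write \<open>T h = \<Sum> h\<^sub>1 \<otimes> \<rho>(h\<^sub>2) \<in> H \<otimes> End V\<close>, so that \<open>LKer\<^sup>\<omega> = {h. T h = \<omega> (h \<otimes> id)}\<close>.
  Coassociativity gives \<open>(\<Delta> \<otimes> id) T = (id \<otimes> T) \<Delta>\<close>, which makes \<open>LKer\<^sup>\<omega>\<close> a left coideal and,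
  applied to \<open>V \<otimes> W\<close>, multiplies the eigenvalues of the two factors.  \<open>T\<close> is an algebra map,
  so the eigenvalues also multiply under products in \<open>H\<close>.  For the adjoint action one needs
  \<open>T (S h) = \<Sum> S(h\<^sub>2) \<otimes> \<rho>(S h\<^sub>1)\<close>: both sides are convolution inverses of \<open>T\<close> in
  \<open>Hom(H, H \<otimes> End V)\<close>.  Then \<open>T (h\<^sub>1 a S h\<^sub>2) = \<omega> \<Sum> h\<^sub>1 a S(h\<^sub>4) \<otimes> \<rho>(h\<^sub>2) \<rho>(S h\<^sub>3)\<close>, and the
  antipode axiom collapses the middle factor to \<open>\<epsilon>(h\<^sub>2) id\<close>.  The sum of all \<open>LKer\<^sup>\<omega>\<close> inherits
  everything, the unit circle being closed under products.\<close>

lemma sum_swap_1_2: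
  "(\<Sum>q\<in>Q. \<Sum>a\<in>A. \<Sum>b\<in>B. f q a b) = (\<Sum>a\<in>A. \<Sum>b\<in>B. \<Sum>q\<in>Q. (f q a b :: 'a::comm_monoid_add))"
  by (subst sum.swap) (rule sum.cong[OF refl], rule sum.swap)

lemma sum_swap_1_3:
  "(\<Sum>q\<in>Q. \<Sum>a\<in>A. \<Sum>b\<in>B. \<Sum>c\<in>C. f q a b c)
     = (\<Sum>a\<in>A. \<Sum>b\<in>B. \<Sum>c\<in>C. \<Sum>q\<in>Q. (f q a b c :: 'a::comm_monoid_add))"
  by (subst sum.swap) (rule sum.cong[OF refl], rule sum_swap_1_2)

lemma sum_swap_1_4:
  "(\<Sum>q\<in>Q. \<Sum>a\<in>A. \<Sum>b\<in>B. \<Sum>c\<in>C. \<Sum>e\<in>E. f q a b c e)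
     = (\<Sum>a\<in>A. \<Sum>b\<in>B. \<Sum>c\<in>C. \<Sum>e\<in>E. \<Sum>q\<in>Q. (f q a b c e :: 'a::comm_monoid_add))"
  by (subst sum.swap) (rule sum.cong[OF refl], rule sum_swap_1_3)

lemma sum_swap_1_5:
  "(\<Sum>q\<in>Q. \<Sum>a\<in>A. \<Sum>b\<in>B. \<Sum>c\<in>C. \<Sum>e\<in>E. \<Sum>g\<in>G. f q a b c e g)
     = (\<Sum>a\<in>A. \<Sum>b\<in>B. \<Sum>c\<in>C. \<Sum>e\<in>E. \<Sum>g\<in>G. \<Sum>q\<in>Q. (f q a b c e g :: 'a::comm_monoid_add))"
  by (subst sum.swap) (rule sum.cong[OF refl], rule sum_swap_1_4)

lemma sum_swap_2_2:
  "(\<Sum>a\<in>A. \<Sum>b\<in>B. \<Sum>c\<in>C. \<Sum>e\<in>E. f a b c e)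
     = (\<Sum>c\<in>C. \<Sum>e\<in>E. \<Sum>a\<in>A. \<Sum>b\<in>B. (f a b c e :: 'a::comm_monoid_add))"
  by (rule trans[OF sum.cong[OF refl sum_swap_1_2] sum_swap_1_2])

lemma sum_swap_2_3:
  "(\<Sum>a\<in>A. \<Sum>b\<in>B. \<Sum>c\<in>C. \<Sum>e\<in>E. \<Sum>g\<in>G. f a b c e g)
     = (\<Sum>c\<in>C. \<Sum>e\<in>E. \<Sum>g\<in>G. \<Sum>a\<in>A. \<Sum>b\<in>B. (f a b c e g :: 'a::comm_monoid_add))"
  by (rule trans[OF sum.cong[OF refl sum_swap_1_3] sum_swap_1_3])

lemma sum_swap_2_4:
  "(\<Sum>a\<in>A. \<Sum>b\<in>B. \<Sum>c\<in>C. \<Sum>e\<in>E. \<Sum>g\<in>G. \<Sum>g'\<in>G'. f a b c e g g')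
     = (\<Sum>c\<in>C. \<Sum>e\<in>E. \<Sum>g\<in>G. \<Sum>g'\<in>G'. \<Sum>a\<in>A. \<Sum>b\<in>B. (f a b c e g g' :: 'a::comm_monoid_add))"
  by (rule trans[OF sum.cong[OF refl sum_swap_1_4] sum_swap_1_4])

lemma if_zero_mult [simp]: "(if P then x else 0) * (y::complex) = (if P then x * y else 0)"
  by simp

lemma mult_if_zero [simp]: "(y::complex) * (if P then x else 0) = (if P then y * x else 0)"
  by simp

lemma sum_if_zero_const [simp]:
  "(\<Sum>k\<in>A. if P then f k else 0) = (if P then sum f A else (0::'a::comm_monoid_add))"
  by simp

lemma bas_vsp [simp]: "i < m \<Longrightarrow> bas i \<in> vsp m"
  by (simp add: bas_def vsp_def)

lemma mult_vsp [simp]: "mult H x y \<in> vsp (hdim H)"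
  by (simp add: vsp_def mult_def)

lemma one_vsp [simp]: "one H \<in> vsp (hdim H)"
  by (simp add: vsp_def one_def)

lemma antipode_vsp [simp]: "antipode H x \<in> vsp (hdim H)"
  by (simp add: vsp_def antipode_def)

lemma mult_bas_bas:
  "i < hdim H \<Longrightarrow> j < hdim H \<Longrightarrow>
     mult H (bas i) (bas j) = (\<lambda>k. if k < hdim H then hmu H i j k else 0)"
  by (auto simp add: mult_def bas_def)

lemma mult_bas_right:
  "j < hdim H \<Longrightarrow>
     mult H x (bas j) k = (if k < hdim H then (\<Sum>i<hdim H. x i * hmu H i j k) else 0)"
  by (auto simp add: mult_def bas_def)

lemma mult_bas_left:
  "i < hdim H \<Longrightarrow>
     mult H (bas i) y k = (if k < hdim H then (\<Sum>j<hdim H. y j * hmu H i j k) else 0)"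
  by (auto simp add: mult_def bas_def mult_ac)

lemma comult_eq:
  "i < hdim H \<Longrightarrow> j < hdim H \<Longrightarrow> comult H x i j = (\<Sum>m<hdim H. x m * hdelta H m i j)"
  by (simp add: comult_def)

lemma comult_outside: "\<not> i < hdim H \<Longrightarrow> comult H x i j = 0"
  by (simp add: comult_def)

lemma comult_bas:
  "k < hdim H \<Longrightarrow>
     comult H (bas k) = (\<lambda>i j. if i < hdim H \<and> j < hdim H then hdelta H k i j else 0)"
  by (intro ext) (auto simp add: comult_def bas_def)

lemma counit_bas: "k < hdim H \<Longrightarrow> counit H (bas k) = heps H k"
  by (simp add: counit_def bas_def)

lemma antipode_bas:
  "k < hdim H \<Longrightarrow> antipode H (bas k) = (\<lambda>i. if i < hdim H then hS H k i else 0)"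
  by (intro ext) (auto simp add: antipode_def bas_def)

lemma act_bas:
  "a < hdim H \<Longrightarrow>
     act H W (bas a) w i = (if i < mdim W then (\<Sum>j<mdim W. w j * mrho W a i j) else 0)"
  by (simp add: act_def bas_def)

lemma tmult_eq:
  "k < hdim H \<Longrightarrow> l < hdim H \<Longrightarrow> tmult H t u k l =
     (\<Sum>i<hdim H. \<Sum>i'<hdim H. \<Sum>j<hdim H. \<Sum>j'<hdim H. t i i' * u j j' * hmu H i j k * hmu H i' j' l)"
  by (simp add: tmult_def)

lemma comult_sum:
  "comult H (\<lambda>k. \<Sum>w\<in>F. f w k) i j = (\<Sum>w\<in>F. comult H (f w) i j)"
  unfolding comult_def by (auto simp: sum_distrib_right intro!: sum.swap)

lemma comult_sum2:
  "comult H (\<lambda>q. \<Sum>c\<in>C. \<Sum>c'\<in>C'. z c c' * f c c' q) i j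
     = (\<Sum>c\<in>C. \<Sum>c'\<in>C'. z c c' * comult H (f c c') i j)"
  unfolding comult_def by (auto simp: sum_distrib_left sum_distrib_right mult_ac intro!: sum_swap_1_2)

lemma mult_sum_left: "mult H (\<lambda>k. \<Sum>w\<in>F. f w k) y = (\<lambda>q. \<Sum>w\<in>F. mult H (f w) y q)"
  unfolding mult_def by (intro ext) (auto simp: sum_distrib_right intro!: sum_swap_1_2[symmetric])

lemma mult_sum_right: "mult H x (\<lambda>k. \<Sum>w\<in>F. f w k) = (\<lambda>q. \<Sum>w\<in>F. mult H x (f w) q)"
  unfolding mult_def
  by (intro ext) (auto simp: sum_distrib_right sum_distrib_left mult_ac intro!: sum_swap_1_2[symmetric])

lemma adj_sum: "adj H h (\<lambda>k. \<Sum>w\<in>F. f w k) = (\<lambda>q. \<Sum>w\<in>F. adj H h (f w) q)"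
  unfolding adj_def
  by (intro ext) (simp add: mult_sum_right mult_sum_left sum_distrib_left, rule sum_swap_1_2[symmetric])

lemma adj_vsp [simp]: "adj H h a \<in> vsp (hdim H)"
  by (simp add: vsp_def adj_def mult_def)

lemma adj_linear:
  assumes p: "p < hdim H"
  shows "adj H h a p = (\<Sum>k<hdim H. h k * adj H (bas k) a p)"
proof -
  define Z where "Z = (\<lambda>i j. mult H (mult H (bas i) a) (antipode H (bas j)) p)"
  have "adj H h a p = (\<Sum>i<hdim H. \<Sum>j<hdim H. \<Sum>k<hdim H. h k * hdelta H k i j * Z i j)"
    unfolding adj_def Z_def by (simp add: comult_eq sum_distrib_right cong: sum.cong_simp)
  also have "\<dots> = (\<Sum>k<hdim H. \<Sum>i<hdim H. \<Sum>j<hdim H. h k * hdelta H k i j * Z i j)"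
    by (rule sum_swap_1_2[symmetric])
  also have "\<dots> = (\<Sum>k<hdim H. h k * adj H (bas k) a p)"
    unfolding adj_def Z_def by (simp add: comult_bas sum_distrib_left mult_ac cong: sum.cong_simp)
  finally show ?thesis .
qed

text \<open>The coefficient of \<open>e\<^sub>p \<otimes> E\<^sub>l\<^sub>r\<close> in \<open>\<Sum> h\<^sub>1 \<otimes> \<rho>(h\<^sub>2) \<in> H \<otimes> End W\<close>.\<close>

definition coact_mat :: "hopf \<Rightarrow> hmod \<Rightarrow> (nat \<Rightarrow> complex) \<Rightarrow> nat \<Rightarrow> nat \<Rightarrow> nat \<Rightarrow> complex" where
  "coact_mat H W h p l r = (\<Sum>j<hdim H. comult H h p j * mrho W j l r)"

lemma coact_eq_coact_mat:
  "coact H W h v p l = (if l < mdim W then (\<Sum>r<mdim W. v r * coact_mat H W h p l r) else 0)"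
  by (simp add: coact_def coact_mat_def act_bas sum_distrib_left sum_distrib_right mult_ac
        cong: sum.cong_simp) (subst sum.swap, simp add: mult_ac)

lemma coact_mat_bas:
  "a < hdim H \<Longrightarrow> x < hdim H \<Longrightarrow> coact_mat H W (bas a) x l m = (\<Sum>j<hdim H. hdelta H a x j * mrho W j l m)"
  by (simp add: coact_mat_def comult_bas cong: sum.cong_simp)

lemma coact_mat_add:
  "coact_mat H W (\<lambda>k. x k + y k) p l r = coact_mat H W x p l r + coact_mat H W y p l r"
  by (simp add: coact_mat_def comult_def distrib_left distrib_right sum.distrib)

lemma coact_mat_scale: "coact_mat H W (\<lambda>q. z * f q) p l r = z * coact_mat H W f p l r"
  by (simp add: coact_mat_def comult_def sum_distrib_left sum_distrib_right mult_ac)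

lemma coact_mat_sum2:
  "coact_mat H W (\<lambda>q. \<Sum>c\<in>C. \<Sum>c'\<in>C'. z c c' * f c c' q) p l r
     = (\<Sum>c\<in>C. \<Sum>c'\<in>C'. z c c' * coact_mat H W (f c c') p l r)"
  unfolding coact_mat_def comult_sum2
  by (simp add: sum_distrib_left sum_distrib_right mult_ac) (rule sum_swap_1_2)

lemma LKer_iff_coact_mat:
  "h \<in> LKer H W \<omega> \<longleftrightarrow> h \<in> vsp (hdim H) \<and>
     (\<forall>p<hdim H. \<forall>l<mdim W. \<forall>r<mdim W.
        coact_mat H W h p l r = \<omega> * h p * (if l = r then 1 else 0))"
    (is "_ \<longleftrightarrow> _ \<and> ?mat")
proof
  assume h: "h \<in> LKer H W \<omega>"
  show "h \<in> vsp (hdim H) \<and> ?mat"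
  proof (intro conjI allI impI)
    show "h \<in> vsp (hdim H)" using h by (simp add: LKer_def)
    fix p l r assume l: "l < mdim W" and r: "r < mdim W"
    have "coact H W h (bas r) p l = \<omega> * tprod h (bas r) p l"
      using h r by (simp add: LKer_def)
    thus "coact_mat H W h p l r = \<omega> * h p * (if l = r then 1 else 0)"
      using l r by (simp add: coact_eq_coact_mat tprod_def) (auto simp add: bas_def)
  qed
next
  assume h: "h \<in> vsp (hdim H) \<and> ?mat"
  show "h \<in> LKer H W \<omega>"
    unfolding LKer_def
  proof (intro CollectI conjI ballI ext)
    show "h \<in> vsp (hdim H)" using h by simp
    fix v p l assume v: "v \<in> vsp (mdim W)"
    show "coact H W h v p l = \<omega> * tprod h v p l"
    proof (cases "p < hdim H \<and> l < mdim W")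
      case True
      hence "coact H W h v p l = (\<Sum>r<mdim W. v r * (\<omega> * h p * (if l = r then 1 else 0)))"
        using h by (simp add: coact_eq_coact_mat)
      thus ?thesis using True by (simp add: tprod_def mult_ac)
    next
      case False
      thus ?thesis using h v
        by (auto simp add: coact_eq_coact_mat coact_mat_def comult_outside tprod_def vsp_def)
    qed
  qed
qed

lemma LKer_vsp: "h \<in> LKer H W \<omega> \<Longrightarrow> h \<in> vsp (hdim H)"
  by (simp add: LKer_def)

lemma LKer_zero: "(\<lambda>_. 0) \<in> LKer H W \<omega>"
  by (simp add: LKer_iff_coact_mat vsp_def coact_mat_def comult_def)

lemma LKer_add: "x \<in> LKer H W \<omega> \<Longrightarrow> y \<in> LKer H W \<omega> \<Longrightarrow> (\<lambda>k. x k + y k) \<in> LKer H W \<omega>"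
  by (simp add: LKer_iff_coact_mat vsp_def coact_mat_add distrib_left distrib_right)

lemma LKer_scale: "x \<in> LKer H W \<omega> \<Longrightarrow> (\<lambda>k. c * x k) \<in> LKer H W \<omega>"
  by (simp add: LKer_iff_coact_mat vsp_def coact_mat_scale mult_ac)

lemma LKer_sum:
  "finite F \<Longrightarrow> (\<forall>x\<in>F. f x \<in> LKer H W \<omega>) \<Longrightarrow> (\<lambda>k. \<Sum>x\<in>F. f x k) \<in> LKer H W \<omega>"
proof (induction F rule: finite_induct)
  case empty
  thus ?case using LKer_zero by simp
next
  case (insert x F)
  hence "(\<lambda>k. f x k + (\<Sum>x\<in>F. f x k)) \<in> LKer H W \<omega>"
    using LKer_add[of "f x" H W \<omega> "\<lambda>k. \<Sum>x\<in>F. f x k"] by simp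
  thus ?case using insert by simp
qed

lemma LKer_lsub: "lsub (hdim H) (LKer H W \<omega>)"
  unfolding lsub_def using LKer_vsp LKer_zero LKer_add LKer_scale by blast

lemma LKsum_intro:
  "finite F \<Longrightarrow> F \<subseteq> {w. cmod w = 1} \<Longrightarrow> (\<forall>w\<in>F. a w \<in> LKer H V w) \<Longrightarrow>
     (\<lambda>k. \<Sum>w\<in>F. a w k) \<in> LKsum H V"
  unfolding LKsum_def by blast

lemma LKsum_elim:
  assumes "x \<in> LKsum H V"
  obtains F a where "finite F" "F \<subseteq> {w. cmod w = 1}" "\<forall>w\<in>F. a w \<in> LKer H V w"
    "x = (\<lambda>k. \<Sum>w\<in>F. a w k)"
  using assms unfolding LKsum_def by blast

lemma LKsum_sum_LKer:
  assumes I: "finite I"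
    and unimodular: "\<And>i. i \<in> I \<Longrightarrow> cmod (g i) = 1"
    and a: "\<And>i. i \<in> I \<Longrightarrow> a i \<in> LKer H V (g i)"
  shows "(\<lambda>k. \<Sum>i\<in>I. a i k) \<in> LKsum H V"
proof -
  \<comment> \<open>group the summands by their eigenvalue\<close>
  define c where "c = (\<lambda>w k. \<Sum>i\<in>{i \<in> I. g i = w}. a i k)"
  have "(\<lambda>k. \<Sum>i\<in>I. a i k) = (\<lambda>k. \<Sum>w\<in>g ` I. c w k)"
    unfolding c_def using I by (intro ext) (rule sum.image_gen)
  moreover have "\<forall>w\<in>g ` I. c w \<in> LKer H V w"
    unfolding c_def using I a by (auto intro!: LKer_sum; metis)
  ultimately show ?thesis using I unimodular by (auto intro!: LKsum_intro)
qed

lemma LKsum_map: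
  assumes x: "x \<in> LKsum H V"
    and unimodular: "\<And>w. cmod w = 1 \<Longrightarrow> cmod (g w) = 1"
    and maps_LKer: "\<And>w y. cmod w = 1 \<Longrightarrow> y \<in> LKer H V w \<Longrightarrow> f y \<in> LKer H V (g w)"
    and additive: "\<And>F (a :: complex \<Rightarrow> nat \<Rightarrow> complex). f (\<lambda>k. \<Sum>w\<in>F. a w k) = (\<lambda>k. \<Sum>w\<in>F. f (a w) k)"
  shows "f x \<in> LKsum H V"
proof -
  obtain F a where F: "finite F" "F \<subseteq> {w. cmod w = 1}" "\<forall>w\<in>F. a w \<in> LKer H V w"
      and x_eq: "x = (\<lambda>k. \<Sum>w\<in>F. a w k)"
    using x by (rule LKsum_elim)
  have "f x = (\<lambda>k. \<Sum>w\<in>F. f (a w) k)" unfolding x_eq by (rule additive)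
  thus ?thesis using F unimodular maps_LKer by (auto intro!: LKsum_sum_LKer[where g = g])
qed

lemma LKsum_add:
  assumes x: "x \<in> LKsum H V" and y: "y \<in> LKsum H V"
  shows "(\<lambda>k. x k + y k) \<in> LKsum H V"
proof -
  obtain F a where F: "finite F" "F \<subseteq> {w. cmod w = 1}" "\<forall>w\<in>F. a w \<in> LKer H V w"
      and x_eq: "x = (\<lambda>k. \<Sum>w\<in>F. a w k)"
    using x by (rule LKsum_elim)
  obtain G b where G: "finite G" "G \<subseteq> {w. cmod w = 1}" "\<forall>w\<in>G. b w \<in> LKer H V w"
      and y_eq: "y = (\<lambda>k. \<Sum>w\<in>G. b w k)"
    using y by (rule LKsum_elim)
  have "(\<lambda>k. x k + y k) = (\<lambda>k. \<Sum>i\<in>F <+> G. case_sum a b i k)"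
    using F(1) G(1) by (simp add: x_eq y_eq sum.Plus comp_def)
  moreover have "(\<lambda>k. \<Sum>i\<in>F <+> G. case_sum a b i k) \<in> LKsum H V"
    using F G by (intro LKsum_sum_LKer[where g = "case_sum id id"]) auto
  ultimately show ?thesis by simp
qed

lemma LKsum_lsub: "lsub (hdim H) (LKsum H V)"
  unfolding lsub_def
proof (intro conjI ballI allI subsetI)
  fix x assume "x \<in> LKsum H V"
  then obtain F a where "\<forall>w\<in>F. a w \<in> LKer H V w" "x = (\<lambda>k. \<Sum>w\<in>F. a w k)"
    by (rule LKsum_elim)
  moreover from this(1) have "\<forall>w\<in>F. a w \<in> vsp (hdim H)" by (blast dest: LKer_vsp)
  ultimately show "x \<in> vsp (hdim H)" by (simp add: vsp_def)
next
  show "(\<lambda>_. 0) \<in> LKsum H V" using LKsum_intro[of "{}"] by simp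
next
  fix x y assume "x \<in> LKsum H V" "y \<in> LKsum H V"
  thus "(\<lambda>k. x k + y k) \<in> LKsum H V" by (rule LKsum_add)
next
  fix c x assume "x \<in> LKsum H V"
  thus "(\<lambda>k. c * x k) \<in> LKsum H V"
    by (rule LKsum_map[where g = id]) (auto simp: LKer_scale sum_distrib_left)
qed

text \<open>Elements of \<open>H \<otimes> End W\<close> are coefficient arrays \<open>X p l r\<close>; maps \<open>H \<rightarrow> H \<otimes> End W\<close> are given
  by their values \<open>F k\<close> on the basis vectors \<open>e\<^sub>k\<close>, and \<open>conv\<close> is their convolution product.\<close>

definition hend_mult :: "hopf \<Rightarrow> hmod \<Rightarrow> (nat \<Rightarrow> nat \<Rightarrow> nat \<Rightarrow> complex)
    \<Rightarrow> (nat \<Rightarrow> nat \<Rightarrow> nat \<Rightarrow> complex) \<Rightarrow> nat \<Rightarrow> nat \<Rightarrow> nat \<Rightarrow> complex" where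
  "hend_mult H W X Y p l r =
     (\<Sum>i<hdim H. \<Sum>j<hdim H. hmu H i j p * (\<Sum>m<mdim W. X i l m * Y j m r))"

definition hend_of :: "(nat \<Rightarrow> complex) \<Rightarrow> nat \<Rightarrow> nat \<Rightarrow> nat \<Rightarrow> complex" where
  "hend_of y = (\<lambda>x l m. y x * (if l = m then 1 else 0))"

definition conv :: "hopf \<Rightarrow> hmod \<Rightarrow> (nat \<Rightarrow> nat \<Rightarrow> nat \<Rightarrow> nat \<Rightarrow> complex)
    \<Rightarrow> (nat \<Rightarrow> nat \<Rightarrow> nat \<Rightarrow> nat \<Rightarrow> complex) \<Rightarrow> nat \<Rightarrow> nat \<Rightarrow> nat \<Rightarrow> nat \<Rightarrow> complex" where
  "conv H W F G k = (\<lambda>p l r. \<Sum>a<hdim H. \<Sum>b<hdim H. hdelta H k a b * hend_mult H W (F a) (G b) p l r)"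

definition conv_one :: "hopf \<Rightarrow> nat \<Rightarrow> nat \<Rightarrow> nat \<Rightarrow> nat \<Rightarrow> complex" where
  "conv_one H k = (\<lambda>p l r. heps H k * hend_of (one H) p l r)"

definition conv_eq :: "hopf \<Rightarrow> hmod \<Rightarrow> (nat \<Rightarrow> nat \<Rightarrow> nat \<Rightarrow> nat \<Rightarrow> complex)
    \<Rightarrow> (nat \<Rightarrow> nat \<Rightarrow> nat \<Rightarrow> nat \<Rightarrow> complex) \<Rightarrow> bool" where
  "conv_eq H W F G \<longleftrightarrow>
     (\<forall>k<hdim H. \<forall>p<hdim H. \<forall>l<mdim W. \<forall>r<mdim W. F k p l r = G k p l r)"

text \<open>The image of \<open>e\<^sub>b\<close> under \<open>h \<mapsto> \<Sum> S(h\<^sub>2) \<otimes> \<rho>(S h\<^sub>1)\<close>.\<close>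

definition flip_antipode_coact :: "hopf \<Rightarrow> hmod \<Rightarrow> nat \<Rightarrow> nat \<Rightarrow> nat \<Rightarrow> nat \<Rightarrow> complex" where
  "flip_antipode_coact H W b = (\<lambda>y m r. \<Sum>c<hdim H. \<Sum>c'<hdim H.
     hdelta H b c c' * hS H c' y * (\<Sum>t<hdim H. hS H c t * mrho W t m r))"

lemma conv_eq_refl: "conv_eq H W F F"
  unfolding conv_eq_def by simp

lemma conv_eq_sym: "conv_eq H W F G \<Longrightarrow> conv_eq H W G F"
  unfolding conv_eq_def by metis

lemma conv_eq_trans [trans]: "conv_eq H W F G \<Longrightarrow> conv_eq H W G K \<Longrightarrow> conv_eq H W F K"
  unfolding conv_eq_def by metis

lemma hend_mult_scale_right:
  "hend_mult H W X (\<lambda>i l m. z * T i l m) p l r = z * hend_mult H W X T p l r"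
  by (simp add: hend_mult_def sum_distrib_left mult_ac)

lemma hend_mult_scale_left:
  "hend_mult H W (\<lambda>i l m. z * T i l m) X p l r = z * hend_mult H W T X p l r"
  by (simp add: hend_mult_def sum_distrib_left mult_ac)

lemma hend_mult_sum2_left:
  "hend_mult H W (\<lambda>i l m. \<Sum>c\<in>C. \<Sum>c'\<in>C'. z c c' * T c c' i l m) Y p l r
     = (\<Sum>c\<in>C. \<Sum>c'\<in>C'. z c c' * hend_mult H W (T c c') Y p l r)"
  unfolding hend_mult_def
  by (simp only: sum_distrib_left sum_distrib_right) (rule trans[OF _ sum_swap_2_3[symmetric]], simp add: mult_ac)

lemma hend_mult_sum2_right:
  "hend_mult H W X (\<lambda>i l m. \<Sum>c\<in>C. \<Sum>c'\<in>C'. z c c' * T c c' i l m) p l r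
     = (\<Sum>c\<in>C. \<Sum>c'\<in>C'. z c c' * hend_mult H W X (T c c') p l r)"
  unfolding hend_mult_def
  by (simp only: sum_distrib_left sum_distrib_right) (rule trans[OF _ sum_swap_2_3[symmetric]], simp add: mult_ac)

lemma hend_mult_cong:
  assumes "l < mdim W" "r < mdim W"
    "\<And>i m. i < hdim H \<Longrightarrow> m < mdim W \<Longrightarrow> X i l m = X' i l m"
    "\<And>j m. j < hdim H \<Longrightarrow> m < mdim W \<Longrightarrow> Y j m r = Y' j m r"
  shows "hend_mult H W X Y p l r = hend_mult H W X' Y' p l r"
  unfolding hend_mult_def using assms by (simp cong: sum.cong_simp)

lemma conv_cong:
  "conv_eq H W F F' \<Longrightarrow> conv_eq H W G G' \<Longrightarrow> conv_eq H W (conv H W F G) (conv H W F' G')"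
  unfolding conv_eq_def conv_def
  by (auto intro!: sum.cong arg_cong2[where f="(*)"] hend_mult_cong)

locale hopf_coords =
  fixes H :: hopf
  assumes hopf: "hopf_algebra H"
begin

abbreviation "n \<equiv> hdim H"

lemma mult_assoc: "x \<in> vsp n \<Longrightarrow> y \<in> vsp n \<Longrightarrow> z \<in> vsp n \<Longrightarrow>
    mult H (mult H x y) z = mult H x (mult H y z)"
  using hopf unfolding hopf_algebra_def by blast

lemma mult_one_left: "x \<in> vsp n \<Longrightarrow> mult H (one H) x = x"
  using hopf unfolding hopf_algebra_def by blast

lemma mult_one_right: "x \<in> vsp n \<Longrightarrow> mult H x (one H) = x"
  using hopf unfolding hopf_algebra_def by blast

lemma counit_comult_left: "x \<in> vsp n \<Longrightarrow> (\<lambda>i. \<Sum>j<n. heps H j * comult H x j i) = x"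
  using hopf unfolding hopf_algebra_def by blast

lemma counit_comult_right: "x \<in> vsp n \<Longrightarrow> (\<lambda>i. \<Sum>j<n. comult H x i j * heps H j) = x"
  using hopf unfolding hopf_algebra_def by blast

lemma comult_mult:
  "x \<in> vsp n \<Longrightarrow> y \<in> vsp n \<Longrightarrow> comult H (mult H x y) = tmult H (comult H x) (comult H y)"
  using hopf unfolding hopf_algebra_def by blast

lemma comult_one: "comult H (one H) = tprod (one H) (one H)"
  using hopf unfolding hopf_algebra_def by blast

lemma mSid_comult: "x \<in> vsp n \<Longrightarrow> mSid H (comult H x) = (\<lambda>k. counit H x * one H k)"
  using hopf unfolding hopf_algebra_def by blast

lemma midS_comult: "x \<in> vsp n \<Longrightarrow> midS H (comult H x) = (\<lambda>k. counit H x * one H k)"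
  using hopf unfolding hopf_algebra_def by blast

lemma delta_coassoc:
  "\<lbrakk>k < n; i < n; j < n; l < n\<rbrakk> \<Longrightarrow>
     (\<Sum>m<n. hdelta H k m l * hdelta H m i j) = (\<Sum>m<n. hdelta H k i m * hdelta H m j l)"
  using hopf unfolding hopf_algebra_def by blast

lemma delta_counit_left:
  assumes "k < n" "i < n"
  shows "(\<Sum>j<n. heps H j * hdelta H k j i) = (if k = i then 1 else 0)"
proof -
  have "(\<Sum>j<n. heps H j * comult H (bas k) j i) = bas k i"
    using fun_cong[OF counit_comult_left[of "bas k"], of i] assms by simp
  thus ?thesis using assms by (simp add: comult_bas cong: sum.cong_simp) (simp add: bas_def)
qed

lemma delta_counit_right:
  assumes "k < n" "i < n"
  shows "(\<Sum>j<n. hdelta H k i j * heps H j) = (if k = i then 1 else 0)"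
proof -
  have "(\<Sum>j<n. comult H (bas k) i j * heps H j) = bas k i"
    using fun_cong[OF counit_comult_right[of "bas k"], of i] assms by simp
  thus ?thesis using assms by (simp add: comult_bas cong: sum.cong_simp) (simp add: bas_def)
qed

lemma delta_antipode_right:
  assumes "k < n" "l < n"
  shows "(\<Sum>i<n. \<Sum>j<n. hdelta H k i j * (\<Sum>m<n. hS H j m * hmu H i m l)) = heps H k * hunit H l"
proof -
  have "midS H (comult H (bas k)) l = counit H (bas k) * one H l"
    using assms by (simp add: midS_comult)
  thus ?thesis using assms
    by (simp add: midS_def comult_bas antipode_bas mult_bas_left counit_bas one_def mult_ac
        cong: sum.cong_simp)
qed

lemma mu_assoc:
  assumes "i < n" "j < n" "k < n" "l < n"
  shows "(\<Sum>m<n. hmu H i j m * hmu H m k l) = (\<Sum>m<n. hmu H j k m * hmu H i m l)"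
proof -
  have "mult H (mult H (bas i) (bas j)) (bas k) l = mult H (bas i) (mult H (bas j) (bas k)) l"
    using assms by (simp add: mult_assoc)
  thus ?thesis using assms
    by (simp add: mult_bas_right mult_bas_left mult_bas_bas mult_ac cong: sum.cong_simp)
qed

lemma mu_unit_left:
  assumes "j < n" "l < n"
  shows "(\<Sum>m<n. hunit H m * hmu H m j l) = (if j = l then 1 else 0)"
proof -
  have "mult H (one H) (bas j) l = bas j l"
    using assms by (simp add: mult_one_left)
  thus ?thesis using assms
    by (simp add: mult_bas_right one_def cong: sum.cong_simp) (auto simp: bas_def)
qed

lemma mu_unit_right:
  assumes "j < n" "l < n"
  shows "(\<Sum>m<n. hunit H m * hmu H j m l) = (if j = l then 1 else 0)"
proof -
  have "mult H (bas j) (one H) l = bas j l"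
    using assms by (simp add: mult_one_right)
  thus ?thesis using assms
    by (simp add: mult_bas_left one_def cong: sum.cong_simp) (auto simp: bas_def)
qed

lemma comult_coassoc:
  assumes "i < n" "p < n" "j < n"
  shows "(\<Sum>k<n. comult H x i k * hdelta H k p j) = (\<Sum>k<n. hdelta H k i p * comult H x k j)"
proof -
  have "(\<Sum>k<n. comult H x i k * hdelta H k p j) = (\<Sum>k<n. \<Sum>m<n. x m * hdelta H m i k * hdelta H k p j)"
    using assms by (simp add: comult_eq sum_distrib_right cong: sum.cong_simp)
  also have "\<dots> = (\<Sum>m<n. x m * (\<Sum>k<n. hdelta H m i k * hdelta H k p j))"
    by (subst sum.swap) (simp add: sum_distrib_left mult_ac)
  also have "\<dots> = (\<Sum>m<n. x m * (\<Sum>k<n. hdelta H m k j * hdelta H k i p))"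
    using assms by (simp add: delta_coassoc)
  also have "\<dots> = (\<Sum>k<n. hdelta H k i p * comult H x k j)"
    using assms by (simp add: comult_eq sum_distrib_left sum_distrib_right mult_ac cong: sum.cong_simp)
      (subst sum.swap, simp add: mult_ac)
  finally show ?thesis .
qed

lemma delta_coassoc3:
  assumes "k < n" "x < n" "j < n" "c < n" "c' < n"
  shows "(\<Sum>a<n. \<Sum>b<n. hdelta H k a b * (hdelta H a x j * hdelta H b c c')) =
         (\<Sum>m<n. \<Sum>t<n. hdelta H k x m * (hdelta H m t c' * hdelta H t j c))"
proof -
  have "(\<Sum>a<n. \<Sum>b<n. hdelta H k a b * (hdelta H a x j * hdelta H b c c')) =
        (\<Sum>b<n. hdelta H b c c' * (\<Sum>a<n. hdelta H k a b * hdelta H a x j))"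
    by (subst sum.swap) (simp add: sum_distrib_left mult_ac)
  also have "\<dots> = (\<Sum>b<n. hdelta H b c c' * (\<Sum>a<n. hdelta H k x a * hdelta H a j b))"
    using assms by (simp add: delta_coassoc cong: sum.cong_simp)
  also have "\<dots> = (\<Sum>a<n. hdelta H k x a * (\<Sum>b<n. hdelta H a j b * hdelta H b c c'))"
    by (simp add: sum_distrib_left mult_ac) (subst sum.swap, simp add: mult_ac)
  also have "\<dots> = (\<Sum>a<n. hdelta H k x a * (\<Sum>b<n. hdelta H a b c' * hdelta H b j c))"
    using assms by (simp add: delta_coassoc cong: sum.cong_simp)
  finally show ?thesis by (simp add: sum_distrib_left mult_ac)
qed

lemma delta_sum_counit_middle:
  assumes k: "k < n"
    and N: "\<And>t. t < n \<Longrightarrow> (\<Sum>j<n. \<Sum>c<n. hdelta H t j c * N j c) = heps H t * z"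
  shows "(\<Sum>a<n. \<Sum>b<n. hdelta H k a b * (\<Sum>x<n. \<Sum>c<n. \<Sum>c'<n. \<Sum>j<n.
            hdelta H a x j * hdelta H b c c' * (M x c' * N j c)))
       = (\<Sum>x<n. \<Sum>c'<n. hdelta H k x c' * M x c') * z"
proof -
  have "(\<Sum>a<n. \<Sum>b<n. hdelta H k a b * (\<Sum>x<n. \<Sum>c<n. \<Sum>c'<n. \<Sum>j<n.
            hdelta H a x j * hdelta H b c c' * (M x c' * N j c)))
      = (\<Sum>x<n. \<Sum>c<n. \<Sum>c'<n. \<Sum>j<n. \<Sum>a<n. \<Sum>b<n.
           hdelta H k a b * (hdelta H a x j * hdelta H b c c' * (M x c' * N j c)))"
    by (simp only: sum_distrib_left) (rule sum_swap_2_4)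
  also have "\<dots> = (\<Sum>x<n. \<Sum>c<n. \<Sum>c'<n. \<Sum>j<n.
      (\<Sum>a<n. \<Sum>b<n. hdelta H k a b * (hdelta H a x j * hdelta H b c c')) * (M x c' * N j c))"
    by (simp add: sum_distrib_right sum_distrib_left mult_ac)
  also have "\<dots> = (\<Sum>x<n. \<Sum>c<n. \<Sum>c'<n. \<Sum>j<n.
      (\<Sum>m<n. \<Sum>t<n. hdelta H k x m * (hdelta H m t c' * hdelta H t j c)) * (M x c' * N j c))"
    using k by (simp add: delta_coassoc3 cong: sum.cong_simp)
  also have "\<dots> = (\<Sum>x<n. \<Sum>c<n. \<Sum>c'<n. \<Sum>j<n. \<Sum>m<n. \<Sum>t<n.
      hdelta H k x m * hdelta H m t c' * M x c' * (hdelta H t j c * N j c))"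
    by (simp add: sum_distrib_right sum_distrib_left mult_ac)
  also have "\<dots> = (\<Sum>x<n. \<Sum>c'<n. \<Sum>m<n. \<Sum>t<n. \<Sum>j<n. \<Sum>c<n.
      hdelta H k x m * hdelta H m t c' * M x c' * (hdelta H t j c * N j c))"
    by (rule sum.cong[OF refl], rule trans[OF sum_swap_1_4], rule sum.cong[OF refl], rule sum_swap_1_2)
  also have "\<dots> = (\<Sum>x<n. \<Sum>c'<n. \<Sum>m<n. \<Sum>t<n.
      hdelta H k x m * hdelta H m t c' * M x c' * (\<Sum>j<n. \<Sum>c<n. hdelta H t j c * N j c))"
    by (simp add: sum_distrib_left)
  also have "\<dots> = (\<Sum>x<n. \<Sum>c'<n. \<Sum>m<n. \<Sum>t<n.
      hdelta H k x m * hdelta H m t c' * M x c' * (heps H t * z))"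
    by (simp add: N cong: sum.cong_simp)
  also have "\<dots> = (\<Sum>x<n. \<Sum>c'<n. \<Sum>m<n. hdelta H k x m * M x c' *
      (\<Sum>t<n. heps H t * hdelta H m t c') * z)"
    by (simp add: sum_distrib_left sum_distrib_right mult_ac)
  also have "\<dots> = (\<Sum>x<n. \<Sum>c'<n. hdelta H k x c' * M x c') * z"
    by (simp add: delta_counit_left sum_distrib_right cong: sum.cong_simp)
  finally show ?thesis .
qed

lemma coact_mat_comult_slice:
  assumes i: "i < n" and p: "p < n"
  shows "coact_mat H W (\<lambda>j. comult H h i j) p l r = (\<Sum>k<n. hdelta H k i p * coact_mat H W h k l r)"
proof -
  have "comult H (\<lambda>j. comult H h i j) p j = (\<Sum>k<n. hdelta H k i p * comult H h k j)" if "j < n" for j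
    using that i p by (simp add: comult_eq[of p H j] comult_coassoc[symmetric] cong: sum.cong_simp)
  hence "coact_mat H W (\<lambda>j. comult H h i j) p l r
      = (\<Sum>j<n. \<Sum>k<n. hdelta H k i p * comult H h k j * mrho W j l r)"
    unfolding coact_mat_def by (simp add: sum_distrib_right cong: sum.cong_simp)
  also have "\<dots> = (\<Sum>k<n. hdelta H k i p * coact_mat H W h k l r)"
    unfolding coact_mat_def by (subst sum.swap) (simp add: sum_distrib_left mult_ac)
  finally show ?thesis .
qed

lemma LKer_comult_slice:
  assumes h: "h \<in> LKer H W \<omega>" and i: "i < n"
  shows "(\<lambda>j. comult H h i j) \<in> LKer H W \<omega>"
  unfolding LKer_iff_coact_mat
proof (intro conjI allI impI)
  show "(\<lambda>j. comult H h i j) \<in> vsp n" by (simp add: vsp_def comult_def)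
  fix p l r assume p: "p < n" and l: "l < mdim W" and r: "r < mdim W"
  have "coact_mat H W (\<lambda>j. comult H h i j) p l r
      = (\<Sum>k<n. hdelta H k i p * (\<omega> * h k * (if l = r then 1 else 0)))"
    using h i p l r by (simp add: coact_mat_comult_slice LKer_iff_coact_mat cong: sum.cong_simp)
  also have "\<dots> = \<omega> * comult H h i p * (if l = r then 1 else 0)"
    using i p by (simp add: comult_eq sum_distrib_left mult_ac)
  finally show "coact_mat H W (\<lambda>j. comult H h i j) p l r = \<omega> * comult H h i p * (if l = r then 1 else 0)" .
qed

lemma LKer_left_coideal: "left_coideal H (LKer H W \<omega>)"
  unfolding left_coideal_def using LKer_lsub LKer_comult_slice by blast

lemma LKsum_left_coideal: "left_coideal H (LKsum H W)"
  unfolding left_coideal_def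
proof (intro conjI LKsum_lsub ballI allI impI)
  fix x i assume x: "x \<in> LKsum H W" and i: "i < n"
  show "(\<lambda>j. comult H x i j) \<in> LKsum H W"
    using x by (rule LKsum_map[where g = id]) (auto simp: LKer_comult_slice[OF _ i] comult_sum)
qed

lemma coact_mat_tens_mod:
  assumes p: "p < n"
  shows "coact_mat H (tens_mod H W U) h p q r = (\<Sum>i<n. mrho W i (q div mdim U) (r div mdim U) *
           (\<Sum>j<n. hdelta H j p i * coact_mat H U h j (q mod mdim U) (r mod mdim U)))"
proof -
  define A where "A = (\<lambda>i. mrho W i (q div mdim U) (r div mdim U))"
  define B where "B = (\<lambda>i'. mrho U i' (q mod mdim U) (r mod mdim U))"
  have "coact_mat H (tens_mod H W U) h p q r
      = (\<Sum>j<n. \<Sum>i<n. \<Sum>i'<n. comult H h p j * hdelta H j i i' * A i * B i')"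
    by (simp add: coact_mat_def tens_mod_def A_def B_def sum_distrib_left mult_ac)
  also have "\<dots> = (\<Sum>i<n. \<Sum>i'<n. (\<Sum>j<n. comult H h p j * hdelta H j i i') * A i * B i')"
    by (subst sum_swap_1_2) (simp add: sum_distrib_right)
  also have "\<dots> = (\<Sum>i<n. \<Sum>i'<n. (\<Sum>j<n. hdelta H j p i * comult H h j i') * A i * B i')"
    using p by (simp add: comult_coassoc cong: sum.cong_simp)
  also have "\<dots> = (\<Sum>i<n. A i * (\<Sum>j<n. hdelta H j p i * coact_mat H U h j (q mod mdim U) (r mod mdim U)))"
    unfolding coact_mat_def B_def
    by (simp only: sum_distrib_left sum_distrib_right)
      (rule sum.cong[OF refl], subst sum.swap, simp add: mult_ac)
  finally show ?thesis unfolding A_def .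
qed

lemma LKer_tens_mod:
  assumes hW: "h \<in> LKer H W \<alpha>" and hU: "h \<in> LKer H U \<beta>"
  shows "h \<in> LKer H (tens_mod H W U) (\<alpha> * \<beta>)"
  unfolding LKer_iff_coact_mat
proof (intro conjI allI impI)
  show "h \<in> vsp n" using hW by (rule LKer_vsp)
  let ?e = "mdim U"
  fix p q r assume p: "p < n" and q: "q < mdim (tens_mod H W U)" and r: "r < mdim (tens_mod H W U)"
  have q': "q < mdim W * ?e" and r': "r < mdim W * ?e" using q r by (auto simp: tens_mod_def)
  hence e: "0 < ?e" by (cases "?e = 0") auto
  have div: "q div ?e < mdim W" "r div ?e < mdim W"
    using q' r' e by (auto simp: less_mult_imp_div_less)
  have mod: "q mod ?e < ?e" "r mod ?e < ?e" using e by auto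
  have "coact_mat H (tens_mod H W U) h p q r = (\<Sum>i<n. mrho W i (q div ?e) (r div ?e) *
      (\<Sum>j<n. hdelta H j p i * (\<beta> * h j * (if q mod ?e = r mod ?e then 1 else 0))))"
    using p hU mod by (simp add: coact_mat_tens_mod LKer_iff_coact_mat cong: sum.cong_simp)
  also have "\<dots> = \<beta> * (if q mod ?e = r mod ?e then 1 else 0) * coact_mat H W h p (q div ?e) (r div ?e)"
    unfolding coact_mat_def using p by (simp add: comult_eq sum_distrib_left mult_ac cong: sum.cong_simp)
  also have "\<dots> = \<alpha> * \<beta> * h p * (if q = r then 1 else 0)"
  proof -
    have "(q mod ?e = r mod ?e \<and> q div ?e = r div ?e) = (q = r)"
      by (metis div_mult_mod_eq)
    thus ?thesis using p hW div by (auto simp: LKer_iff_coact_mat)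
  qed
  finally show "coact_mat H (tens_mod H W U) h p q r = \<alpha> * \<beta> * h p * (if q = r then 1 else 0)" .
qed

lemma LKer_triv_mod: "h \<in> vsp n \<Longrightarrow> h \<in> LKer H (triv_mod H) 1"
  unfolding LKer_iff_coact_mat
proof (intro conjI allI impI)
  fix p l r assume h: "h \<in> vsp n" and p: "p < n" and "l < mdim (triv_mod H)" "r < mdim (triv_mod H)"
  hence lr: "l = 0" "r = 0" by (auto simp: triv_mod_def)
  have "coact_mat H (triv_mod H) h p l r = (\<Sum>j<n. (\<Sum>m<n. h m * hdelta H m p j) * heps H j)"
    using p by (simp add: coact_mat_def triv_mod_def comult_eq cong: sum.cong_simp)
  also have "\<dots> = (\<Sum>m<n. h m * (\<Sum>j<n. hdelta H m p j * heps H j))"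
    by (simp add: sum_distrib_right sum_distrib_left mult_ac) (rule sum.swap)
  also have "\<dots> = h p" using p by (simp add: delta_counit_right cong: sum.cong_simp)
  finally show "coact_mat H (triv_mod H) h p l r = 1 * h p * (if l = r then 1 else 0)" using lr by simp
qed auto

lemma LKer_tpow: "h \<in> LKer H W \<omega> \<Longrightarrow> h \<in> LKer H (tpow H W l) (\<omega> ^ l)"
proof (induction l)
  case 0
  thus ?case by (simp add: LKer_vsp LKer_triv_mod)
next
  case (Suc l) thus ?case using LKer_tens_mod[of h "tpow H W l" "\<omega>^l" W \<omega>] by (simp add: mult_ac)
qed

lemma hend_mult_assoc:
  assumes p: "p < n"
  shows "hend_mult H W (hend_mult H W X Y) Z p l r = hend_mult H W X (hend_mult H W Y Z) p l r"
proof -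
  have L: "hend_mult H W (hend_mult H W X Y) Z p l r = (\<Sum>a<n. \<Sum>b<n. \<Sum>j<n. \<Sum>m'<mdim W. \<Sum>m<mdim W.
     (\<Sum>i<n. hmu H a b i * hmu H i j p) * (X a l m' * Y b m' m * Z j m r))"
    unfolding hend_mult_def
    apply (simp only: sum_distrib_left sum_distrib_right)
    apply (rule trans[OF sum_swap_1_5])
    apply (rule trans[OF sum_swap_1_3])
    apply (rule trans[OF sum_swap_1_4])
    apply (simp add: mult_ac)
    done
  have R: "hend_mult H W X (hend_mult H W Y Z) p l r = (\<Sum>a<n. \<Sum>b<n. \<Sum>j<n. \<Sum>m'<mdim W. \<Sum>m<mdim W.
     (\<Sum>c<n. hmu H b j c * hmu H a c p) * (X a l m' * Y b m' m * Z j m r))"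
    unfolding hend_mult_def
    apply (simp only: sum_distrib_left sum_distrib_right)
    apply (rule sum.cong[OF refl])
    apply (rule trans[OF sum_swap_1_4])
    apply (rule trans[OF sum_swap_1_2])
    apply (simp add: mult_ac)
    done
  show ?thesis unfolding L R using p by (simp add: mu_assoc cong: sum.cong_simp)
qed

lemma hend_mult_one_right:
  assumes "p < n" "r < mdim W"
  shows "hend_mult H W X (hend_of (one H)) p l r = X p l r"
proof -
  have "hend_mult H W X (hend_of (one H)) p l r = (\<Sum>i<n. X i l r * (\<Sum>j<n. hunit H j * hmu H i j p))"
    using assms by (simp add: hend_mult_def hend_of_def one_def sum_distrib_left mult_ac cong: sum.cong_simp)
  also have "\<dots> = X p l r" using assms by (simp add: mu_unit_right cong: sum.cong_simp)
  finally show ?thesis .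
qed

lemma hend_mult_one_left:
  assumes "p < n" "l < mdim W"
  shows "hend_mult H W (hend_of (one H)) X p l r = X p l r"
proof -
  have "hend_mult H W (hend_of (one H)) X p l r = (\<Sum>j<n. X j l r * (\<Sum>i<n. hunit H i * hmu H i j p))"
    using assms by (simp add: hend_mult_def hend_of_def one_def sum_distrib_left mult_ac cong: sum.cong_simp)
      (subst sum.swap, simp add: mult_ac)
  also have "\<dots> = X p l r" using assms by (simp add: mu_unit_left cong: sum.cong_simp)
  finally show ?thesis .
qed

lemma conv_one_right: "conv_eq H W (conv H W F (conv_one H)) F"
  unfolding conv_eq_def
proof (intro allI impI)
  fix k p l r assume k: "k < n" and p: "p < n" and l: "l < mdim W" and r: "r < mdim W"
  have "conv H W F (conv_one H) k p l r = (\<Sum>a<n. (\<Sum>b<n. hdelta H k a b * heps H b) * F a p l r)"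
    unfolding conv_def conv_one_def using p r
    by (simp add: hend_mult_scale_right hend_mult_one_right sum_distrib_right sum_distrib_left mult_ac)
  also have "\<dots> = F k p l r" using k by (simp add: delta_counit_right cong: sum.cong_simp)
  finally show "conv H W F (conv_one H) k p l r = F k p l r" .
qed

lemma conv_one_left: "conv_eq H W (conv H W (conv_one H) F) F"
  unfolding conv_eq_def
proof (intro allI impI)
  fix k p l r assume k: "k < n" and p: "p < n" and l: "l < mdim W" and r: "r < mdim W"
  have "conv H W (conv_one H) F k p l r = (\<Sum>b<n. (\<Sum>a<n. heps H a * hdelta H k a b) * F b p l r)"
    unfolding conv_def conv_one_def using p l
    by (simp add: hend_mult_scale_left hend_mult_one_left sum_distrib_right sum_distrib_left mult_ac) (rule sum.swap)
  also have "\<dots> = F k p l r" using k by (simp add: delta_counit_left cong: sum.cong_simp)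
  finally show "conv H W (conv_one H) F k p l r = F k p l r" .
qed

lemma conv_assoc: "conv_eq H W (conv H W (conv H W F G) K) (conv H W F (conv H W G K))"
  unfolding conv_eq_def
proof (intro allI impI)
  fix k p l r assume k: "k < n" and p: "p < n" and l: "l < mdim W" and r: "r < mdim W"
  let ?W = "\<lambda>c c' b. hend_mult H W (F c) (hend_mult H W (G c') (K b)) p l r"
  have "conv H W (conv H W F G) K k p l r = (\<Sum>a<n. \<Sum>b<n. \<Sum>c<n. \<Sum>c'<n.
      hdelta H k a b * (hdelta H a c c' * ?W c c' b))"
    unfolding conv_def using p by (simp add: hend_mult_sum2_left hend_mult_assoc sum_distrib_left)
  also have "\<dots> = (\<Sum>c<n. \<Sum>c'<n. \<Sum>b<n. (\<Sum>a<n. hdelta H k a b * hdelta H a c c') * ?W c c' b)"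
    apply (rule trans[OF sum_swap_1_3])
    apply (rule trans[OF sum_swap_1_2])
    apply (simp add: sum_distrib_right sum_distrib_left mult_ac)
    done
  also have "\<dots> = (\<Sum>c<n. \<Sum>c'<n. \<Sum>b<n. (\<Sum>a<n. hdelta H k c a * hdelta H a c' b) * ?W c c' b)"
    using k by (simp add: delta_coassoc cong: sum.cong_simp)
  also have "\<dots> = conv H W F (conv H W G K) k p l r"
    unfolding conv_def
    apply (simp add: hend_mult_sum2_right sum_distrib_left sum_distrib_right)
    apply (rule sum.cong[OF refl])
    apply (rule trans[OF _ sum_swap_1_2[symmetric]])
    apply (simp add: mult_ac)
    done
  finally show "conv H W (conv H W F G) K k p l r = conv H W F (conv H W G K) k p l r" .
qed

lemma conv_inverse_unique:
  assumes "conv_eq H W (conv H W F G) (conv_one H)" and "conv_eq H W (conv H W G K) (conv_one H)"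
  shows "conv_eq H W F K"
proof -
  have "conv_eq H W F (conv H W F (conv_one H))" by (rule conv_eq_sym[OF conv_one_right])
  also have "conv_eq H W \<dots> (conv H W F (conv H W G K))"
    by (rule conv_cong[OF conv_eq_refl conv_eq_sym[OF assms(2)]])
  also have "conv_eq H W \<dots> (conv H W (conv H W F G) K)" by (rule conv_eq_sym[OF conv_assoc])
  also have "conv_eq H W \<dots> (conv H W (conv_one H) K)" by (rule conv_cong[OF assms(1) conv_eq_refl])
  also have "conv_eq H W \<dots> K" by (rule conv_one_left)
  finally show ?thesis .
qed

lemma adj_bas_eq:
  assumes yv: "yv \<in> vsp n" and k: "k < n" and p: "p < n"
  shows "adj H (bas k) yv p
       = (\<Sum>x<n. \<Sum>c<n. hdelta H k x c * (\<Sum>q<n. hmu H x q p * mult H yv (antipode H (bas c)) q))"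
proof -
  have "mult H (mult H (bas x) yv) (antipode H (bas c)) p
      = (\<Sum>q<n. hmu H x q p * mult H yv (antipode H (bas c)) q)" if "x < n" for x c
    using that yv p by (simp add: mult_assoc mult_bas_left mult_ac)
  thus ?thesis using k by (simp add: adj_def comult_bas cong: sum.cong_simp)
qed

lemma adj_bas_one:
  assumes k: "k < n" and p: "p < n"
  shows "adj H (bas k) (one H) p = heps H k * hunit H p"
proof -
  have "midS H (comult H (bas k)) p = counit H (bas k) * one H p"
    using k by (simp add: midS_comult)
  moreover have "adj H (bas k) (one H) p = midS H (comult H (bas k)) p"
    by (simp add: adj_def midS_def mult_one_right cong: sum.cong_simp)
  ultimately show ?thesis using k p by (simp add: counit_bas one_def)
qed

end

locale hopf_module_coords = hopf_coords +
  fixes V :: hmod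
  assumes hm: "hmodule H V"
begin

abbreviation "d \<equiv> mdim V"
abbreviation "coact_bas \<equiv> (\<lambda>k. coact_mat H V (bas k))"
abbreviation "coact_antipode_bas \<equiv> (\<lambda>k. coact_mat H V (antipode H (bas k)))"

lemma act_mult: "\<lbrakk>x \<in> vsp n; y \<in> vsp n; v \<in> vsp d\<rbrakk> \<Longrightarrow>
    act H V (mult H x y) v = act H V x (act H V y v)"
  using hm unfolding hmodule_def by blast

lemma act_one: "v \<in> vsp d \<Longrightarrow> act H V (one H) v = v"
  using hm unfolding hmodule_def by blast

lemma rho_mult:
  assumes "a < n" "b < n" "i < d" "j < d"
  shows "(\<Sum>k<n. hmu H a b k * mrho V k i j) = (\<Sum>m<d. mrho V a i m * mrho V b m j)"
proof -
  have "act H V (mult H (bas a) (bas b)) (bas j) i = act H V (bas a) (act H V (bas b) (bas j)) i"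
    using assms by (simp add: act_mult)
  thus ?thesis using assms
    by (simp add: act_bas mult_bas_bas cong: sum.cong_simp) (simp add: act_def bas_def mult_ac)
qed

lemma rho_unit:
  assumes "i < d" "j < d"
  shows "(\<Sum>k<n. hunit H k * mrho V k i j) = (if i = j then 1 else 0)"
proof -
  have "act H V (one H) (bas j) i = bas j i"
    using assms by (simp add: act_one)
  thus ?thesis using assms
    by (simp add: act_def one_def bas_def cong: sum.cong_simp)
qed

lemma coact_mat_mult:
  assumes x: "x \<in> vsp n" and y: "y \<in> vsp n" and p: "p < n" and l: "l < d" and r: "r < d"
  shows "coact_mat H V (mult H x y) p l r = hend_mult H V (coact_mat H V x) (coact_mat H V y) p l r"
proof -
  have "coact_mat H V (mult H x y) p l r = (\<Sum>q<n. (\<Sum>i<n. \<Sum>i'<n. \<Sum>j<n. \<Sum>j'<n.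
      comult H x i i' * comult H y j j' * hmu H i j p * hmu H i' j' q) * mrho V q l r)"
    unfolding coact_mat_def using x y p by (simp add: comult_mult tmult_eq cong: sum.cong_simp)
  also have "\<dots> = (\<Sum>i<n. \<Sum>i'<n. \<Sum>j<n. \<Sum>j'<n.
      comult H x i i' * comult H y j j' * hmu H i j p * (\<Sum>q<n. hmu H i' j' q * mrho V q l r))"
    by (simp only: sum_distrib_left sum_distrib_right, subst sum_swap_1_4) (simp add: mult_ac)
  also have "\<dots> = (\<Sum>i<n. \<Sum>i'<n. \<Sum>j<n. \<Sum>j'<n.
      comult H x i i' * comult H y j j' * hmu H i j p * (\<Sum>m<d. mrho V i' l m * mrho V j' m r))"
    using l r by (simp add: rho_mult cong: sum.cong_simp)
  also have "\<dots> = hend_mult H V (coact_mat H V x) (coact_mat H V y) p l r"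
    unfolding hend_mult_def coact_mat_def
    apply (simp only: sum_distrib_left sum_distrib_right)
    apply (rule sum.cong[OF refl], rule trans[OF sum.swap], rule sum.cong[OF refl])
    apply (rule trans[OF _ sum_swap_1_2[symmetric]], rule trans[OF _ sum.swap])
    apply (simp add: mult_ac)
    done
  finally show ?thesis .
qed

lemma coact_mat_one: "p < n \<Longrightarrow> l < d \<Longrightarrow> r < d \<Longrightarrow> coact_mat H V (one H) p l r = hend_of (one H) p l r"
  unfolding coact_mat_def comult_one
  by (simp add: tprod_def hend_of_def one_def mult.assoc sum_distrib_left[symmetric] rho_unit cong: sum.cong_simp)

lemma LKer_mult:
  assumes a: "a \<in> LKer H V \<omega>" and b: "b \<in> LKer H V \<omega>'"
  shows "mult H a b \<in> LKer H V (\<omega> * \<omega>')"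
  unfolding LKer_iff_coact_mat
proof (intro conjI allI impI)
  show "mult H a b \<in> vsp n" by simp
  fix p l r assume p: "p < n" and l: "l < d" and r: "r < d"
  have "coact_mat H V (mult H a b) p l r = (\<Sum>i<n. \<Sum>j<n. hmu H i j p *
      (\<Sum>m<d. (\<omega> * a i * (if l = m then 1 else 0)) * (\<omega>' * b j * (if m = r then 1 else 0))))"
    using a b p l r by (simp add: coact_mat_mult hend_mult_def LKer_iff_coact_mat cong: sum.cong_simp)
  also have "\<dots> = (\<Sum>i<n. \<Sum>j<n. hmu H i j p * (\<omega> * a i * \<omega>' * b j * (if l = r then 1 else 0)))"
    using l by (auto intro!: sum.cong simp: mult_ac)
  also have "\<dots> = \<omega> * \<omega>' * mult H a b p * (if l = r then 1 else 0)"
    using p by (simp add: mult_def sum_distrib_left mult_ac)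
  finally show "coact_mat H V (mult H a b) p l r = \<omega> * \<omega>' * mult H a b p * (if l = r then 1 else 0)" .
qed

lemma one_LKer: "one H \<in> LKer H V 1"
  unfolding LKer_iff_coact_mat by (simp add: coact_mat_one hend_of_def)

lemma LKsum_subalgebra: "subalgebra H (LKsum H V)"
  unfolding subalgebra_def
proof (intro conjI LKsum_lsub ballI)
  show "one H \<in> LKsum H V" using LKsum_intro[of "{1}" "\<lambda>_. one H"] one_LKer by simp
next
  fix x y assume x: "x \<in> LKsum H V" and y: "y \<in> LKsum H V"
  obtain F a where F: "finite F" "F \<subseteq> {w. cmod w = 1}" "\<forall>w\<in>F. a w \<in> LKer H V w"
      and x_eq: "x = (\<lambda>k. \<Sum>w\<in>F. a w k)"
    using x by (rule LKsum_elim)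
  obtain G b where G: "finite G" "G \<subseteq> {w. cmod w = 1}" "\<forall>w\<in>G. b w \<in> LKer H V w"
      and y_eq: "y = (\<lambda>k. \<Sum>w\<in>G. b w k)"
    using y by (rule LKsum_elim)
  have "mult H x y = (\<lambda>q. \<Sum>(w, w')\<in>F \<times> G. mult H (a w) (b w') q)"
    by (simp add: x_eq y_eq mult_sum_left mult_sum_right sum.cartesian_product)
  moreover have "(\<lambda>q. \<Sum>(w, w')\<in>F \<times> G. mult H (a w) (b w') q) \<in> LKsum H V"
    using F G by (intro LKsum_sum_LKer[where g = "\<lambda>(w, w'). w * w'"])
      (auto simp: norm_mult LKer_mult subset_iff)
  ultimately show "mult H x y \<in> LKsum H V" by simp
qed

lemma conv_coact_antipode_coact: "conv_eq H V (conv H V coact_antipode_bas coact_bas) (conv_one H)"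
  unfolding conv_eq_def
proof (intro allI impI)
  fix k p l r assume k: "k < n" and p: "p < n" and l: "l < d" and r: "r < d"
  have "conv H V coact_antipode_bas coact_bas k p l r
      = (\<Sum>a<n. \<Sum>b<n. hdelta H k a b * coact_mat H V (mult H (antipode H (bas a)) (bas b)) p l r)"
    unfolding conv_def using p l r by (simp add: coact_mat_mult cong: sum.cong_simp)
  also have "\<dots> = coact_mat H V (mSid H (comult H (bas k))) p l r"
    using k by (simp add: mSid_def comult_bas coact_mat_sum2 cong: sum.cong_simp)
  also have "\<dots> = conv_one H k p l r"
    using k p l r by (simp add: mSid_comult coact_mat_scale coact_mat_one counit_bas conv_one_def)
  finally show "conv H V coact_antipode_bas coact_bas k p l r = conv_one H k p l r" .
qed

lemma hend_mult_hend_of_flip_antipode: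
  assumes q: "q < n" and m: "m < d"
  shows "hend_mult H V (hend_of u) (flip_antipode_coact H V b) q m r = (\<Sum>c<n. \<Sum>c'<n. hdelta H b c c' *
     mult H u (antipode H (bas c')) q * (\<Sum>t<n. hS H c t * mrho V t m r))"
proof -
  define P where "P = (\<lambda>c. \<Sum>t<n. hS H c t * mrho V t m r)"
  have mu: "mult H u (antipode H (bas c')) q = (\<Sum>x<n. \<Sum>y<n. u x * hS H c' y * hmu H x y q)" if "c' < n" for c'
    using q that by (simp add: mult_def antipode_bas cong: sum.cong_simp)
  have "hend_mult H V (hend_of u) (flip_antipode_coact H V b) q m r = (\<Sum>x<n. \<Sum>y<n. hmu H x y q * (u x * flip_antipode_coact H V b y m r))"
    using m by (simp add: hend_mult_def hend_of_def)
  also have "\<dots> = (\<Sum>x<n. \<Sum>y<n. \<Sum>c<n. \<Sum>c'<n. hdelta H b c c' * (u x * hS H c' y * hmu H x y q) * P c)"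
    unfolding flip_antipode_coact_def P_def by (simp add: sum_distrib_left mult_ac)
  also have "\<dots> = (\<Sum>c<n. \<Sum>c'<n. \<Sum>x<n. \<Sum>y<n. hdelta H b c c' * (u x * hS H c' y * hmu H x y q) * P c)"
    by (rule sum_swap_2_2)
  also have "\<dots> = (\<Sum>c<n. \<Sum>c'<n. hdelta H b c c' * mult H u (antipode H (bas c')) q * P c)"
    by (simp add: mu sum_distrib_left sum_distrib_right cong: sum.cong_simp)
  finally show ?thesis unfolding P_def .
qed

lemma hend_mult_coact_bas_flip_antipode:
  assumes a: "a < n" and p: "p < n" and l: "l < d"
  shows "hend_mult H V (coact_bas a) (hend_mult H V (hend_of u) (flip_antipode_coact H V b)) p l r =
    (\<Sum>x<n. \<Sum>c<n. \<Sum>c'<n. \<Sum>j<n. hdelta H a x j * hdelta H b c c' *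
       ((\<Sum>q<n. hmu H x q p * mult H u (antipode H (bas c')) q) *
        (\<Sum>m<d. mrho V j l m * (\<Sum>t<n. hS H c t * mrho V t m r))))"
proof -
  define P where "P = (\<lambda>c m. \<Sum>t<n. hS H c t * mrho V t m r)"
  define Y where "Y = (\<lambda>c' q. mult H u (antipode H (bas c')) q)"
  have "hend_mult H V (coact_bas a) (hend_mult H V (hend_of u) (flip_antipode_coact H V b)) p l r =
     (\<Sum>x<n. \<Sum>q<n. hmu H x q p * (\<Sum>m<d. (\<Sum>j<n. hdelta H a x j * mrho V j l m) *
        (\<Sum>c<n. \<Sum>c'<n. hdelta H b c c' * Y c' q * P c m)))"
    unfolding hend_mult_def[of H V "coact_bas a"] P_def Y_def using a
    by (simp add: coact_mat_bas hend_mult_hend_of_flip_antipode cong: sum.cong_simp)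
  also have "\<dots> = (\<Sum>x<n. \<Sum>q<n. \<Sum>m<d. \<Sum>c<n. \<Sum>c'<n. \<Sum>j<n.
      hmu H x q p * ((hdelta H a x j * mrho V j l m) * (hdelta H b c c' * Y c' q * P c m)))"
    by (simp only: sum_distrib_left sum_distrib_right)
  also have "\<dots> = (\<Sum>x<n. \<Sum>c<n. \<Sum>c'<n. \<Sum>j<n. \<Sum>q<n. \<Sum>m<d.
      hmu H x q p * ((hdelta H a x j * mrho V j l m) * (hdelta H b c c' * Y c' q * P c m)))"
    by (rule sum.cong[OF refl], rule sum_swap_2_3)
  also have "\<dots> = (\<Sum>x<n. \<Sum>c<n. \<Sum>c'<n. \<Sum>j<n. hdelta H a x j * hdelta H b c c' *
       ((\<Sum>q<n. hmu H x q p * Y c' q) * (\<Sum>m<d. mrho V j l m * P c m)))"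
    by (simp add: sum_distrib_left sum_distrib_right mult_ac)
  finally show ?thesis unfolding P_def Y_def .
qed

lemma rho_antipode_right:
  assumes t: "t < n" and l: "l < d" and r: "r < d"
  shows "(\<Sum>j<n. \<Sum>c<n. hdelta H t j c * (\<Sum>m<d. mrho V j l m * (\<Sum>t'<n. hS H c t' * mrho V t' m r)))
        = heps H t * (if l = r then 1 else 0)"
proof -
  have "(\<Sum>j<n. \<Sum>c<n. hdelta H t j c * (\<Sum>m<d. mrho V j l m * (\<Sum>t'<n. hS H c t' * mrho V t' m r)))
      = (\<Sum>j<n. \<Sum>c<n. hdelta H t j c * (\<Sum>t'<n. hS H c t' * (\<Sum>m<d. mrho V j l m * mrho V t' m r)))"
    by (simp add: sum_distrib_left mult_ac) (rule sum.cong[OF refl], rule sum.cong[OF refl], rule sum.swap)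
  also have "\<dots> = (\<Sum>j<n. \<Sum>c<n. hdelta H t j c * (\<Sum>t'<n. hS H c t' * (\<Sum>z<n. hmu H j t' z * mrho V z l r)))"
    using l r by (simp add: rho_mult cong: sum.cong_simp)
  also have "\<dots> = (\<Sum>j<n. \<Sum>c<n. \<Sum>t'<n. \<Sum>z<n. hdelta H t j c * (hS H c t' * hmu H j t' z) * mrho V z l r)"
    by (simp add: sum_distrib_left mult_ac)
  also have "\<dots> = (\<Sum>z<n. \<Sum>j<n. \<Sum>c<n. \<Sum>t'<n. hdelta H t j c * (hS H c t' * hmu H j t' z) * mrho V z l r)"
    by (rule sum_swap_1_3[symmetric])
  also have "\<dots> = (\<Sum>z<n. (\<Sum>j<n. \<Sum>c<n. hdelta H t j c * (\<Sum>t'<n. hS H c t' * hmu H j t' z)) * mrho V z l r)"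
    by (simp add: sum_distrib_left sum_distrib_right mult_ac)
  also have "\<dots> = (\<Sum>z<n. heps H t * hunit H z * mrho V z l r)"
    using t by (simp add: delta_antipode_right cong: sum.cong_simp)
  also have "\<dots> = heps H t * (if l = r then 1 else 0)"
    using l r by (simp add: rho_unit sum_distrib_left[symmetric] mult.assoc)
  finally show ?thesis .
qed

lemma conv_coact_adj:
  assumes u: "u \<in> vsp n" and k: "k < n" and p: "p < n" and l: "l < d" and r: "r < d"
  shows "conv H V coact_bas (\<lambda>b. hend_mult H V (hend_of u) (flip_antipode_coact H V b)) k p l r
       = adj H (bas k) u p * (if l = r then 1 else 0)"
proof -
  define M where "M = (\<lambda>x c'. \<Sum>q<n. hmu H x q p * mult H u (antipode H (bas c')) q)"
  define N where "N = (\<lambda>j c. \<Sum>m<d. mrho V j l m * (\<Sum>t<n. hS H c t * mrho V t m r))"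
  have "conv H V coact_bas (\<lambda>b. hend_mult H V (hend_of u) (flip_antipode_coact H V b)) k p l r =
    (\<Sum>a<n. \<Sum>b<n. hdelta H k a b * (\<Sum>x<n. \<Sum>c<n. \<Sum>c'<n. \<Sum>j<n.
       hdelta H a x j * hdelta H b c c' * (M x c' * N j c)))"
    unfolding conv_def M_def N_def using p l by (simp add: hend_mult_coact_bas_flip_antipode cong: sum.cong_simp)
  also have "\<dots> = (\<Sum>x<n. \<Sum>c'<n. hdelta H k x c' * M x c') * (if l = r then 1 else 0)"
    using k by (rule delta_sum_counit_middle) (simp add: N_def rho_antipode_right l r)
  also have "\<dots> = adj H (bas k) u p * (if l = r then 1 else 0)"
    using u k p by (simp add: adj_bas_eq M_def)
  finally show ?thesis .
qed

lemma conv_coact_flip_antipode: "conv_eq H V (conv H V coact_bas (flip_antipode_coact H V)) (conv_one H)"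
proof -
  have "conv_eq H V (flip_antipode_coact H V) (\<lambda>b. hend_mult H V (hend_of (one H)) (flip_antipode_coact H V b))"
    unfolding conv_eq_def by (simp add: hend_mult_one_left)
  hence "conv_eq H V (conv H V coact_bas (flip_antipode_coact H V))
      (conv H V coact_bas (\<lambda>b. hend_mult H V (hend_of (one H)) (flip_antipode_coact H V b)))"
    by (intro conv_cong conv_eq_refl)
  also have "conv_eq H V \<dots> (conv_one H)"
    unfolding conv_eq_def
    by (intro allI impI) (simp add: conv_coact_adj adj_bas_one, simp add: conv_one_def hend_of_def one_def)
  finally show ?thesis .
qed

lemma coact_antipode_eq_flip: "conv_eq H V coact_antipode_bas (flip_antipode_coact H V)"
  using conv_coact_antipode_coact conv_coact_flip_antipode by (rule conv_inverse_unique)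

lemma coact_mat_adj_summand:
  assumes a: "a \<in> LKer H V \<omega>" and i: "i < n" and j: "j < n" and p: "p < n" and l: "l < d" and r: "r < d"
  shows "coact_mat H V (mult H (mult H (bas i) a) (antipode H (bas j))) p l r
       = \<omega> * hend_mult H V (coact_bas i) (hend_mult H V (hend_of a) (flip_antipode_coact H V j)) p l r"
proof -
  have av: "a \<in> vsp n" using a by (rule LKer_vsp)
  have left: "coact_mat H V (mult H (bas i) a) x l m = \<omega> * hend_mult H V (coact_bas i) (hend_of a) x l m"
    if "x < n" "m < d" for x m
  proof -
    have "coact_mat H V (mult H (bas i) a) x l m = hend_mult H V (coact_bas i) (coact_mat H V a) x l m"
      using that i av l by (simp add: coact_mat_mult)
    also have "\<dots> = hend_mult H V (coact_bas i) (\<lambda>y m' m. \<omega> * hend_of a y m' m) x l m"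
      using a l that by (intro hend_mult_cong) (auto simp: LKer_iff_coact_mat hend_of_def)
    finally show ?thesis by (simp add: hend_mult_scale_right)
  qed
  have right: "coact_antipode_bas j y m r = flip_antipode_coact H V j y m r" if "y < n" "m < d" for y m
    using coact_antipode_eq_flip j that r unfolding conv_eq_def by blast
  have "coact_mat H V (mult H (mult H (bas i) a) (antipode H (bas j))) p l r
      = hend_mult H V (coact_mat H V (mult H (bas i) a)) (coact_antipode_bas j) p l r"
    using p l r by (simp add: coact_mat_mult)
  also have "\<dots> = hend_mult H V (\<lambda>x l m. \<omega> * hend_mult H V (coact_bas i) (hend_of a) x l m)
      (flip_antipode_coact H V j) p l r"
    using l r by (intro hend_mult_cong) (auto simp: left right)
  also have "\<dots> = \<omega> * hend_mult H V (coact_bas i) (hend_mult H V (hend_of a) (flip_antipode_coact H V j)) p l r"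
    using p by (simp add: hend_mult_scale_left hend_mult_assoc)
  finally show ?thesis .
qed

lemma LKer_adj:
  assumes a: "a \<in> LKer H V \<omega>"
  shows "adj H h a \<in> LKer H V \<omega>"
  unfolding LKer_iff_coact_mat
proof (intro conjI allI impI adj_vsp)
  fix p l r assume p: "p < n" and l: "l < d" and r: "r < d"
  have "coact_mat H V (adj H h a) p l r = (\<Sum>i<n. \<Sum>j<n. comult H h i j *
      coact_mat H V (mult H (mult H (bas i) a) (antipode H (bas j))) p l r)"
    unfolding adj_def by (rule coact_mat_sum2)
  also have "\<dots> = (\<Sum>i<n. \<Sum>j<n. \<Sum>k<n. h k * hdelta H k i j *
      (\<omega> * hend_mult H V (coact_bas i) (hend_mult H V (hend_of a) (flip_antipode_coact H V j)) p l r))"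
    using a p l r by (simp add: coact_mat_adj_summand comult_eq sum_distrib_right cong: sum.cong_simp)
  also have "\<dots> = \<omega> * (\<Sum>k<n. h k *
      conv H V coact_bas (\<lambda>b. hend_mult H V (hend_of a) (flip_antipode_coact H V b)) k p l r)"
    unfolding conv_def by (subst sum_swap_1_2[symmetric]) (simp add: sum_distrib_left mult_ac)
  also have "\<dots> = \<omega> * adj H h a p * (if l = r then 1 else 0)"
    using a p l r
    by (simp add: conv_coact_adj LKer_vsp adj_linear[of p H h a] sum_distrib_left sum_distrib_right mult_ac
        cong: sum.cong_simp)
  finally show "coact_mat H V (adj H h a) p l r = \<omega> * adj H h a p * (if l = r then 1 else 0)" .
qed

lemma LKer_ad_stable: "ad_stable H (LKer H V \<omega>)"
  unfolding ad_stable_def using LKer_adj by blast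

lemma LKsum_ad_stable: "ad_stable H (LKsum H V)"
  unfolding ad_stable_def
proof (intro ballI)
  fix h x assume "x \<in> LKsum H V"
  thus "adj H h x \<in> LKsum H V"
    by (rule LKsum_map[where g = id]) (auto simp: LKer_adj adj_sum)
qed

end

theorem lemma3p1:
  assumes "hopf_algebra H" and "hmodule H V"
  shows "(\<forall>\<omega>. cmod \<omega> = 1 \<and> LKer H V \<omega> \<noteq> {\<lambda>_. 0} \<longrightarrow>
            left_coideal H (LKer H V \<omega>) \<and> ad_stable H (LKer H V \<omega>))
       \<and> (\<forall>\<omega> \<omega>'. cmod \<omega> = 1 \<longrightarrow> cmod \<omega>' = 1 \<longrightarrow>
            (\<forall>a\<in>LKer H V \<omega>. \<forall>b\<in>LKer H V \<omega>'. mult H a b \<in> LKer H V (\<omega> * \<omega>')))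
       \<and> (\<forall>\<omega> (l::nat). cmod \<omega> = 1 \<longrightarrow> \<omega> ^ l = 1 \<longrightarrow>
            LKer H V \<omega> \<subseteq> LKer H (tpow H V l) 1)
       \<and> normal_left_coideal_subalgebra H (LKsum H V)"
proof -
  interpret hopf_module_coords H V using assms by unfold_locales
  have "LKer H V \<omega> \<subseteq> LKer H (tpow H V l) 1" if "\<omega> ^ l = 1" for \<omega> l
    using LKer_tpow[of _ V \<omega> l] that by auto
  thus ?thesis
    using LKer_left_coideal LKer_ad_stable LKer_mult
      LKsum_left_coideal LKsum_subalgebra LKsum_ad_stable
    unfolding normal_left_coideal_subalgebra_def by blast
qed

end
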